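(* Let $A,W\in\mathbb R^{d\times d}$ be symmetric positive definite and $c\in\mathbb R^d$; let $\mathcal X=\{x:\|x\|_A\le1\}$, $\Theta=\{\theta:\|\theta-c\|_W\le1\}$. Let $U$ be an orthogonal matrix with $A^{1/2}WA^{1/2}=U\Lambda U^\top$, $\Lambda=\mathrm{diag}(\lambda_1,\dots,\lambda_d)$, and let $b=U^\top A^{-1/2}c$. Let $F(y)=-\sum_{i=1}^d\sqrt{y_i}\,|b_i|-\sqrt{\sum_{i=1}^d\lambda_i^{-1}y_i}$ and consider the problem $P_C$: minimize $F(y)$ over $y\in\Delta_{d-1}$. Given $y\in\Delta_{d-1}$, define $u_i=\sqrt{y_i}\,\mathrm{sign}(b_i)$ for $i\in[d]$, $x=A^{-1/2}Uu$ and $\theta^\star=c+W^{-1}x/\|x\|_{W^{-1}}$. Then $(x,\theta^\star)\in\mathcal X\times\Theta$, and for any $\varepsilon>0$, $y$ is an $\varepsilon$-solution to $P_C$ if and only if $(x,\theta^\star)$ is an $\varepsilon$-solution to $P_B$.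
   Context: $\|z\|_M=\sqrt{z^\top Mz}$. $\Delta_{d-1}=\{y\in\mathbb R^d:y_i\ge0,\sum_iy_i=1\}$. Convention $\mathrm{sign}(0)=1$. $P_B$: maximize $x^\top\theta$ over $(x,\theta)\in\mathcal X\times\Theta$. An $\varepsilon$-solution to $P_B$ is a pair $(x,\theta)\in\mathcal X\times\Theta$ with $x^\top\theta\ge\sup_{\mathcal X\times\Theta}x'^\top\theta'-\varepsilon$; an $\varepsilon$-solution to $P_C$ is $y\in\Delta_{d-1}$ with $F(y)\le\min_{\Delta_{d-1}}F+\varepsilon$. *)

theory Defs
  imports "HOL-Analysis.Analysis"
begin

definition Mnorm :: "real^'n^'n \<Rightarrow> real^'n \<Rightarrow> real" where
  "Mnorm M z = sqrt (z \<bullet> (M *v z))"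

definition sym_pd :: "real^'n^'n \<Rightarrow> bool" where
  "sym_pd M \<longleftrightarrow> transpose M = M \<and> (\<forall>z. z \<noteq> 0 \<longrightarrow> z \<bullet> (M *v z) > 0)"

definition diagm :: "real^'n \<Rightarrow> real^'n^'n" where
  "diagm l = (\<chi> i j. if i = j then l $ i else 0)"

definition prob_simplex :: "(real^'n) set" where
  "prob_simplex = {y. (\<forall>i. y $ i \<ge> 0) \<and> sum (\<lambda>i. y $ i) UNIV = 1}"

definition sgn1 :: "real \<Rightarrow> real" where
  "sgn1 t = (if t \<ge> 0 then 1 else -1)"

definition eps_sol_B :: "(real^'n) set \<Rightarrow> (real^'n) set \<Rightarrow> real^'n \<Rightarrow> real^'n \<Rightarrow> real \<Rightarrow> bool" where
  "eps_sol_B X T x \<theta> \<epsilon> \<longleftrightarrow> x \<in> X \<and> \<theta> \<in> T \<and>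
     x \<bullet> \<theta> \<ge> (SUP p\<in>X \<times> T. fst p \<bullet> snd p) - \<epsilon>"

definition eps_sol_C :: "(real^'n \<Rightarrow> real) \<Rightarrow> real^'n \<Rightarrow> real \<Rightarrow> bool" where
  "eps_sol_C F y \<epsilon> \<longleftrightarrow> y \<in> prob_simplex \<and> F y \<le> (INF y'\<in>prob_simplex. F y') + \<epsilon>"

end

theory Submission
  imports Defs
begin

(* The substitution x = S^-1 U v turns X into the unit ball in v, the linear term x.c into
   v.b and ||x||^2 in the norm of W^-1 into sum_i v_i^2 / lam_i.  For fixed x, Cauchy-Schwarz
   in the W-inner product shows that the maximum of x.theta over the ellipsoid Theta is
   x.c + ||x||_(W^-1), attained at theta_star.  So P_B amounts to maximising
   v.b + sqrt (sum_i v_i^2 / lam_i) over the unit ball.  With y_i = v_i^2 and the signs of v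
   matched to those of b this value is -F(y), and any v in the ball is beaten by a point of
   the simplex with y_i >= v_i^2 (all lam_i are positive).  Hence sup P_B = - inf P_C, and
   since the objective values at y and at (x, theta_star) coincide, the two optimality gaps
   are equal. *)

lemma inner_matrix_vector_transpose:
  "((M::real^'n^'m) *v x) \<bullet> y = x \<bullet> (transpose M *v y)"
  by (metis dot_lmul_matrix inner_commute transpose_matrix_vector)

declare transpose_matrix_vector [simp del]

lemma matrix_vector_mul_right_inverse:
  assumes "M ** N = mat 1"
  shows "M *v (N *v w) = w"
  by (simp add: matrix_vector_mul_assoc assms)

lemma sym_pd_invertible:
  fixes M :: "real^'n^'n"
  assumes "sym_pd M"
  shows "invertible M"
proof -
  have "\<forall>x. M *v x = 0 \<longrightarrow> x = 0"
    using assms unfolding sym_pd_def by (metis inner_zero_right less_irrefl)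
  then show ?thesis
    using matrix_left_invertible_ker invertible_left_inverse by blast
qed

lemma sym_pd_matrix_inv_mult:
  fixes M :: "real^'n^'n"
  assumes "sym_pd M"
  shows "M ** matrix_inv M = mat 1" "matrix_inv M ** M = mat 1"
proof -
  have "\<exists>M'. M ** M' = mat 1 \<and> M' ** M = mat 1"
    using sym_pd_invertible[OF assms] unfolding invertible_def by blast
  then have "M ** matrix_inv M = mat 1 \<and> matrix_inv M ** M = mat 1"
    unfolding matrix_inv_def by (rule someI_ex)
  then show "M ** matrix_inv M = mat 1" "matrix_inv M ** M = mat 1"
    by auto
qed

lemma sym_pd_matrix_inv:
  fixes M :: "real^'n^'n"
  assumes "sym_pd M"
  shows "sym_pd (matrix_inv M)"
  unfolding sym_pd_def
proof (intro conjI allI impI)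
  have MT: "transpose M = M"
    using assms sym_pd_def by blast
  have "transpose (matrix_inv M) ** M = transpose (M ** matrix_inv M)"
    by (simp add: matrix_transpose_mul MT)
  then have left_inv: "transpose (matrix_inv M) ** M = mat 1"
    using sym_pd_matrix_inv_mult(1)[OF assms] by simp
  have "transpose (matrix_inv M) = transpose (matrix_inv M) ** (M ** matrix_inv M)"
    using sym_pd_matrix_inv_mult(1)[OF assms] by simp
  also have "\<dots> = matrix_inv M"
    by (simp add: matrix_mul_assoc left_inv)
  finally show "transpose (matrix_inv M) = matrix_inv M" .
next
  fix z :: "real^'n"
  assume "z \<noteq> 0"
  let ?w = "matrix_inv M *v z"
  have Mw: "M *v ?w = z"
    using sym_pd_matrix_inv_mult(1)[OF assms] by (rule matrix_vector_mul_right_inverse)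
  with \<open>z \<noteq> 0\<close> have "?w \<noteq> 0"
    by auto
  then have "?w \<bullet> (M *v ?w) > 0"
    using assms sym_pd_def by blast
  then show "z \<bullet> (matrix_inv M *v z) > 0"
    using Mw by (simp add: inner_commute)
qed

lemma sym_pd_nonneg:
  fixes M :: "real^'n^'n"
  assumes "sym_pd M"
  shows "0 \<le> z \<bullet> (M *v z)"
  using assms unfolding sym_pd_def by (cases "z = 0") (auto intro: less_imp_le)

lemma sym_pd_Cauchy_Schwarz:
  fixes M :: "real^'n^'n"
  assumes "sym_pd M"
  shows "(a \<bullet> (M *v d))\<^sup>2 \<le> (a \<bullet> (M *v a)) * (d \<bullet> (M *v d))"
proof (cases "d = 0")
  case True
  then show ?thesis by simp
next
  case False
  have sym: "d \<bullet> (M *v a) = a \<bullet> (M *v d)"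
    using assms inner_matrix_vector_transpose[of M d a]
    by (simp add: sym_pd_def inner_commute)
  have qd: "d \<bullet> (M *v d) > 0"
    using False assms sym_pd_def by blast
  define t where "t = - (a \<bullet> (M *v d)) / (d \<bullet> (M *v d))"
  have "0 \<le> (a + t *\<^sub>R d) \<bullet> (M *v (a + t *\<^sub>R d))"
    by (rule sym_pd_nonneg[OF assms])
  also have "\<dots> = a \<bullet> (M *v a) + 2 * t * (a \<bullet> (M *v d)) + t\<^sup>2 * (d \<bullet> (M *v d))"
    by (simp add: inner_add_left inner_add_right sym power2_eq_square algebra_simps)
  also have "\<dots> = a \<bullet> (M *v a) - (a \<bullet> (M *v d))\<^sup>2 / (d \<bullet> (M *v d))"
    using qd unfolding t_def by (simp add: field_simps power2_eq_square)
  finally show ?thesis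
    using qd by (simp add: divide_le_eq mult.commute)
qed

lemma inner_le_Mnorm_matrix_inv:
  fixes W :: "real^'n^'n"
  assumes "sym_pd W"
  shows "x \<bullet> d \<le> Mnorm (matrix_inv W) x * Mnorm W d"
proof -
  let ?a = "matrix_inv W *v x"
  have Wa: "W *v ?a = x"
    using sym_pd_matrix_inv_mult(1)[OF assms] by (rule matrix_vector_mul_right_inverse)
  have "x \<bullet> d = ?a \<bullet> (W *v d)"
    using assms inner_matrix_vector_transpose[of W ?a d] Wa by (simp add: sym_pd_def)
  moreover have "?a \<bullet> (W *v ?a) = x \<bullet> (matrix_inv W *v x)"
    using Wa by (simp add: inner_commute)
  ultimately have "(x \<bullet> d)\<^sup>2 \<le> (x \<bullet> (matrix_inv W *v x)) * (d \<bullet> (W *v d))"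
    using sym_pd_Cauchy_Schwarz[OF assms, of ?a d] by simp
  then have "x \<bullet> d \<le> sqrt ((x \<bullet> (matrix_inv W *v x)) * (d \<bullet> (W *v d)))"
    by (rule real_le_rsqrt)
  then show ?thesis
    by (simp add: Mnorm_def real_sqrt_mult)
qed

definition ellipsoid_maximizer :: "real^'n^'n \<Rightarrow> real^'n \<Rightarrow> real^'n \<Rightarrow> real^'n" where
  "ellipsoid_maximizer W c x = c + (1 / Mnorm (matrix_inv W) x) *\<^sub>R (matrix_inv W *v x)"

lemma inner_le_ellipsoid_support:
  fixes W :: "real^'n^'n"
  assumes "sym_pd W" and "Mnorm W (\<theta> - c) \<le> 1"
  shows "x \<bullet> \<theta> \<le> x \<bullet> c + Mnorm (matrix_inv W) x"
proof -
  have "x \<bullet> (\<theta> - c) \<le> Mnorm (matrix_inv W) x * Mnorm W (\<theta> - c)"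
    by (rule inner_le_Mnorm_matrix_inv[OF assms(1)])
  also have "\<dots> \<le> Mnorm (matrix_inv W) x"
    using assms(2) sym_pd_nonneg[OF sym_pd_matrix_inv[OF assms(1)]]
    by (simp add: Mnorm_def mult_left_le)
  finally show ?thesis
    by (simp add: inner_diff_right)
qed

lemma ellipsoid_maximizer:
  fixes W :: "real^'n^'n"
  assumes "sym_pd W" and "x \<noteq> 0"
  shows "Mnorm W (ellipsoid_maximizer W c x - c) = 1"
    and "x \<bullet> ellipsoid_maximizer W c x = x \<bullet> c + Mnorm (matrix_inv W) x"
proof -
  define q where "q = x \<bullet> (matrix_inv W *v x)"
  have q: "q > 0"
    using sym_pd_matrix_inv[OF assms(1)] assms(2) unfolding q_def sym_pd_def by blast
  have m: "Mnorm (matrix_inv W) x = sqrt q"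
    by (simp add: Mnorm_def q_def)
  have "W *v (matrix_inv W *v x) = x"
    using sym_pd_matrix_inv_mult(1)[OF assms(1)] by (rule matrix_vector_mul_right_inverse)
  then show "Mnorm W (ellipsoid_maximizer W c x - c) = 1"
    using q by (simp add: ellipsoid_maximizer_def m Mnorm_def matrix_vector_mult_scaleR
        inner_commute q_def[symmetric] power2_eq_square[symmetric])
  show "x \<bullet> ellipsoid_maximizer W c x = x \<bullet> c + Mnorm (matrix_inv W) x"
    using q by (simp add: ellipsoid_maximizer_def m inner_add_right q_def[symmetric] real_div_sqrt)
qed

lemma left_inverse_diagm:
  assumes "M ** diagm l = mat 1"
  shows "M = diagm (\<chi> i. 1 / l $ i)"
proof -
  have entry: "M $ i $ j * l $ j = (if i = j then 1 else 0)" for i j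
    using arg_cong[OF assms, of "\<lambda>N. N $ i $ j"]
    by (simp add: matrix_matrix_mult_def diagm_def mat_def if_distrib[of "(*) _"] cong: if_cong)
  have "l $ j \<noteq> 0" for j
    using entry[of j j] by auto
  then have "M $ i $ j = (if i = j then 1 / l $ j else 0)" for i j
    using entry[of i j] by (auto simp: field_simps)
  then show ?thesis
    by (simp add: diagm_def vec_eq_iff)
qed

lemma inner_diagm: "v \<bullet> (diagm l *v v) = (\<Sum>i\<in>UNIV. l $ i * (v $ i)\<^sup>2)"
  by (simp add: inner_vec_def matrix_vector_mult_def diagm_def power2_eq_square
      if_distrib[of "(*) _"] mult_ac cong: if_cong)

lemma prob_simplex_le_one:
  assumes "y \<in> prob_simplex"
  shows "y $ i \<le> 1"
  using assms member_le_sum[of i UNIV "\<lambda>i. y $ i"] unfolding prob_simplex_def by simp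

lemma prob_simplex_above_squares:
  fixes v :: "real^'n"
  assumes "v \<bullet> v \<le> 1"
  shows "\<exists>y\<in>prob_simplex. \<forall>i. (v $ i)\<^sup>2 \<le> y $ i"
proof -
  obtain j :: 'n where True by blast
  define y where "y = (\<chi> i. (v $ i)\<^sup>2 + (if i = j then 1 - v \<bullet> v else 0))"
  have "(\<Sum>i\<in>UNIV. y $ i) = v \<bullet> v + (1 - v \<bullet> v)"
    by (simp add: y_def sum.distrib inner_vec_def power2_eq_square)
  then have "y \<in> prob_simplex"
    using assms by (simp add: prob_simplex_def y_def)
  moreover have "\<forall>i. (v $ i)\<^sup>2 \<le> y $ i"
    using assms by (simp add: y_def)
  ultimately show ?thesis
    by blast
qed

lemma cSUP_eq_uminus_cINF_if_matched:
  fixes f :: "'a \<Rightarrow> real" and F :: "'b \<Rightarrow> real"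
  assumes "Y \<noteq> {}" and bdd_F: "bdd_below (F ` Y)"
    and matched: "\<And>y. y \<in> Y \<Longrightarrow> \<exists>p\<in>P. f p = - F y"
    and dominated: "\<And>p. p \<in> P \<Longrightarrow> \<exists>y\<in>Y. f p \<le> - F y"
  shows "(SUP p\<in>P. f p) = - (INF y\<in>Y. F y)"
proof (rule antisym)
  have le: "f p \<le> - (INF y\<in>Y. F y)" if p: "p \<in> P" for p
  proof -
    obtain y where "y \<in> Y" and "f p \<le> - F y"
      using dominated[OF p] by blast
    moreover have "(INF y\<in>Y. F y) \<le> F y"
      using cINF_lower[OF bdd_F \<open>y \<in> Y\<close>] .
    ultimately show ?thesis
      by linarith
  qed
  have "P \<noteq> {}"
    using assms(1) matched by blast
  then show "(SUP p\<in>P. f p) \<le> - (INF y\<in>Y. F y)"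
    using le by (rule cSUP_least)
  have "- F y \<le> (SUP p\<in>P. f p)" if y: "y \<in> Y" for y
  proof -
    obtain p where "p \<in> P" and "f p = - F y"
      using matched[OF y] by blast
    moreover have "bdd_above (f ` P)"
      using le by (rule bdd_aboveI2)
    ultimately show ?thesis
      using cSUP_upper by metis
  qed
  then have "- (SUP p\<in>P. f p) \<le> (INF y\<in>Y. F y)"
    using assms(1) by (intro cINF_greatest) force+
  then show "- (INF y\<in>Y. F y) \<le> (SUP p\<in>P. f p)"
    by linarith
qed

locale ellipsoid_bilinear_program =
  fixes A W S U :: "real^'n^'n" and c lam b :: "real^'n"
    and X \<Theta> :: "(real^'n) set" and F :: "real^'n \<Rightarrow> real"
  assumes W_pd: "sym_pd W" and S_pd: "sym_pd S" and S_square: "S ** S = A"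
    and U_orth: "orthogonal_matrix U"
    and eig: "S ** W ** S = U ** diagm lam ** transpose U"
    and X_eq: "X = {x. Mnorm A x \<le> 1}"
    and \<Theta>_eq: "\<Theta> = {\<theta>. Mnorm W (\<theta> - c) \<le> 1}"
    and b_eq: "b = transpose U *v (matrix_inv S *v c)"
    and F_eq: "F = (\<lambda>y. - (\<Sum>i\<in>UNIV. sqrt (y $ i) * \<bar>b $ i\<bar>)
                        - sqrt (\<Sum>i\<in>UNIV. y $ i / lam $ i))"
begin

lemma S_cancel [simp]:
  "S *v (matrix_inv S *v w) = w" "matrix_inv S *v (S *v w) = w"
  by (simp_all add: matrix_vector_mul_right_inverse sym_pd_matrix_inv_mult[OF S_pd])

lemma U_cancel [simp]:
  "transpose U *v (U *v w) = w" "U *v (transpose U *v w) = w"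
  using U_orth by (simp_all add: matrix_vector_mul_right_inverse orthogonal_matrix_def)

lemma transpose_matrix_inv_S [simp]: "transpose (matrix_inv S) = matrix_inv S"
  using sym_pd_matrix_inv[OF S_pd] by (simp add: sym_pd_def)

lemma Mnorm_A_substitution: "Mnorm A (matrix_inv S *v (U *v v)) = norm v"
proof -
  have "A *v z = S *v (S *v z)" for z
    using S_square by (simp add: matrix_vector_mul_assoc)
  then show ?thesis
    by (simp add: Mnorm_def norm_eq_sqrt_inner inner_matrix_vector_transpose)
qed

lemma inner_c_substitution: "(matrix_inv S *v (U *v v)) \<bullet> c = v \<bullet> b"
  by (simp add: inner_matrix_vector_transpose b_eq)

lemma substituted_W_inv_diagm:
  "transpose U ** matrix_inv S ** matrix_inv W ** matrix_inv S ** U = diagm (\<chi> i. 1 / lam $ i)"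
proof (rule left_inverse_diagm)
  have cancel: "M ** (N ** Z) = Z" if "M ** N = mat 1" for M N Z :: "real^'n^'n"
    using that by (simp add: matrix_mul_assoc)
  note inv = sym_pd_matrix_inv_mult[OF S_pd] sym_pd_matrix_inv_mult[OF W_pd]
    U_orth[unfolded orthogonal_matrix_def]
  have "diagm lam = transpose U ** (S ** W ** S) ** U"
    using eig by (simp add: matrix_mul_assoc[symmetric] cancel inv)
  then show "transpose U ** matrix_inv S ** matrix_inv W ** matrix_inv S ** U ** diagm lam = mat 1"
    by (simp add: matrix_mul_assoc[symmetric] cancel inv)
qed

lemma W_inv_form_substitution:
  "(matrix_inv S *v (U *v v)) \<bullet> (matrix_inv W *v (matrix_inv S *v (U *v v)))
     = (\<Sum>i\<in>UNIV. (v $ i)\<^sup>2 / lam $ i)"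
proof -
  have "(matrix_inv S *v (U *v v)) \<bullet> (matrix_inv W *v (matrix_inv S *v (U *v v)))
      = v \<bullet> ((transpose U ** matrix_inv S ** matrix_inv W ** matrix_inv S ** U) *v v)"
    by (simp add: inner_matrix_vector_transpose matrix_vector_mul_assoc[symmetric])
  also have "\<dots> = (\<Sum>i\<in>UNIV. (v $ i)\<^sup>2 / lam $ i)"
    by (simp add: substituted_W_inv_diagm inner_diagm)
  finally show ?thesis .
qed

lemma lam_pos: "0 < lam $ i"
proof -
  let ?z = "matrix_inv S *v (U *v axis i 1)"
  have "Mnorm A ?z = 1"
    by (simp add: Mnorm_A_substitution)
  then have "?z \<noteq> 0"
    by (auto simp: Mnorm_def)
  then have "0 < ?z \<bullet> (matrix_inv W *v ?z)"
    using sym_pd_matrix_inv[OF W_pd] by (simp add: sym_pd_def)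
  also have "\<dots> = 1 / lam $ i"
  proof -
    have "(axis i 1 $ j)\<^sup>2 / lam $ j = (if j = i then 1 / lam $ i else 0)" for j
      by (simp add: axis_def)
    then show ?thesis
      by (simp add: W_inv_form_substitution)
  qed
  finally show ?thesis
    by simp
qed

lemma neg_F:
  "- F y = (\<Sum>i\<in>UNIV. sqrt (y $ i) * \<bar>b $ i\<bar>) + sqrt (\<Sum>i\<in>UNIV. y $ i / lam $ i)"
  by (simp add: F_eq)

lemma neg_F_ge_if_squares_le:
  assumes "\<forall>i. (v $ i)\<^sup>2 \<le> y $ i"
  shows "v \<bullet> b + sqrt (\<Sum>i\<in>UNIV. (v $ i)\<^sup>2 / lam $ i) \<le> - F y"
proof -
  have "v $ i * b $ i \<le> sqrt (y $ i) * \<bar>b $ i\<bar>" for i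
  proof -
    have "\<bar>v $ i\<bar> \<le> sqrt (y $ i)"
      using assms real_sqrt_le_mono[of "(v $ i)\<^sup>2" "y $ i"] by simp
    then have "\<bar>v $ i\<bar> * \<bar>b $ i\<bar> \<le> sqrt (y $ i) * \<bar>b $ i\<bar>"
      by (simp add: mult_right_mono)
    then show ?thesis
      by (metis abs_ge_self abs_mult order_trans)
  qed
  then have "v \<bullet> b \<le> (\<Sum>i\<in>UNIV. sqrt (y $ i) * \<bar>b $ i\<bar>)"
    unfolding inner_vec_def by (simp add: sum_mono)
  moreover have "sqrt (\<Sum>i\<in>UNIV. (v $ i)\<^sup>2 / lam $ i) \<le> sqrt (\<Sum>i\<in>UNIV. y $ i / lam $ i)"
    using assms lam_pos
    by (intro real_sqrt_le_mono sum_mono divide_right_mono) (auto intro: less_imp_le)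
  ultimately show ?thesis
    unfolding neg_F by linarith
qed

lemma neg_F_upper_bound:
  assumes "y \<in> prob_simplex"
  shows "- F y \<le> (\<Sum>i\<in>UNIV. \<bar>b $ i\<bar>) + sqrt (\<Sum>i\<in>UNIV. 1 / lam $ i)"
proof -
  have y: "0 \<le> y $ i" "y $ i \<le> 1" for i
    using assms prob_simplex_le_one by (auto simp: prob_simplex_def)
  have "(\<Sum>i\<in>UNIV. sqrt (y $ i) * \<bar>b $ i\<bar>) \<le> (\<Sum>i\<in>UNIV. \<bar>b $ i\<bar>)"
    using y by (intro sum_mono) (simp add: mult_left_le_one_le)
  moreover have "sqrt (\<Sum>i\<in>UNIV. y $ i / lam $ i) \<le> sqrt (\<Sum>i\<in>UNIV. 1 / lam $ i)"
    using y lam_pos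
    by (intro real_sqrt_le_mono sum_mono divide_right_mono) (auto intro: less_imp_le)
  ultimately show ?thesis
    unfolding neg_F by linarith
qed

lemma signed_sqrt_coordinates:
  assumes "y \<in> prob_simplex" and v: "v = (\<chi> i. sqrt (y $ i) * sgn1 (b $ i))"
  shows "norm v = 1" and "v \<bullet> b = (\<Sum>i\<in>UNIV. sqrt (y $ i) * \<bar>b $ i\<bar>)"
    and "(\<Sum>i\<in>UNIV. (v $ i)\<^sup>2 / lam $ i) = (\<Sum>i\<in>UNIV. y $ i / lam $ i)"
proof -
  have square: "(v $ i)\<^sup>2 = y $ i" for i
    using assms by (simp add: prob_simplex_def sgn1_def power_mult_distrib)
  then show "norm v = 1"
    using assms(1)
    by (simp add: norm_eq_sqrt_inner inner_vec_def prob_simplex_def power2_eq_square[symmetric])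
  show "v \<bullet> b = (\<Sum>i\<in>UNIV. sqrt (y $ i) * \<bar>b $ i\<bar>)"
    unfolding inner_vec_def v by (intro sum.cong) (auto simp: sgn1_def abs_if)
  show "(\<Sum>i\<in>UNIV. (v $ i)\<^sup>2 / lam $ i) = (\<Sum>i\<in>UNIV. y $ i / lam $ i)"
    by (simp add: square)
qed

lemma primal_point_of_simplex:
  assumes "y \<in> prob_simplex"
    and x: "x = matrix_inv S *v (U *v (\<chi> i. sqrt (y $ i) * sgn1 (b $ i)))"
  shows "x \<in> X" and "ellipsoid_maximizer W c x \<in> \<Theta>"
    and "x \<bullet> ellipsoid_maximizer W c x = - F y"
proof -
  define v where "v = (\<chi> i. sqrt (y $ i) * sgn1 (b $ i))"
  note v = signed_sqrt_coordinates[OF assms(1) v_def]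
  have "Mnorm A x = 1"
    using Mnorm_A_substitution v(1) by (simp add: x v_def[symmetric])
  then show "x \<in> X"
    by (simp add: X_eq)
  have "x \<noteq> 0"
    using \<open>Mnorm A x = 1\<close> by (auto simp: Mnorm_def)
  then show "ellipsoid_maximizer W c x \<in> \<Theta>"
    by (simp add: \<Theta>_eq ellipsoid_maximizer(1)[OF W_pd])
  have "x \<bullet> ellipsoid_maximizer W c x = x \<bullet> c + Mnorm (matrix_inv W) x"
    by (rule ellipsoid_maximizer(2)[OF W_pd \<open>x \<noteq> 0\<close>])
  also have "\<dots> = - F y"
    by (simp add: x v_def[symmetric] inner_c_substitution Mnorm_def W_inv_form_substitution
        v(2,3) neg_F)
  finally show "x \<bullet> ellipsoid_maximizer W c x = - F y" .
qed

lemma objective_dominated_by_neg_F: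
  assumes "x \<in> X" and "\<theta> \<in> \<Theta>"
  shows "\<exists>y\<in>prob_simplex. x \<bullet> \<theta> \<le> - F y"
proof -
  define v where "v = transpose U *v (S *v x)"
  have x: "x = matrix_inv S *v (U *v v)"
    by (simp add: v_def)
  have "v \<bullet> v \<le> 1"
    using assms(1) Mnorm_A_substitution[of v] by (simp add: X_eq x norm_eq_sqrt_inner)
  then obtain y where "y \<in> prob_simplex" and "\<forall>i. (v $ i)\<^sup>2 \<le> y $ i"
    using prob_simplex_above_squares by blast
  have "x \<bullet> \<theta> \<le> x \<bullet> c + Mnorm (matrix_inv W) x"
    using assms(2) by (simp add: \<Theta>_eq inner_le_ellipsoid_support[OF W_pd])
  also have "\<dots> = v \<bullet> b + sqrt (\<Sum>i\<in>UNIV. (v $ i)\<^sup>2 / lam $ i)"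
    by (simp add: x inner_c_substitution Mnorm_def W_inv_form_substitution)
  also have "\<dots> \<le> - F y"
    by (rule neg_F_ge_if_squares_le) fact
  finally show ?thesis
    using \<open>y \<in> prob_simplex\<close> by blast
qed

lemma SUP_objective_eq_uminus_INF_F:
  "(SUP p\<in>X \<times> \<Theta>. fst p \<bullet> snd p) = - (INF y\<in>prob_simplex. F y)"
proof (rule cSUP_eq_uminus_cINF_if_matched)
  show "prob_simplex \<noteq> {}"
    using prob_simplex_above_squares[of 0] by auto
  show "bdd_below (F ` prob_simplex)"
  proof (rule bdd_belowI2)
    fix y :: "real^'n"
    assume "y \<in> prob_simplex"
    then show "- ((\<Sum>i\<in>UNIV. \<bar>b $ i\<bar>) + sqrt (\<Sum>i\<in>UNIV. 1 / lam $ i)) \<le> F y"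
      using neg_F_upper_bound[OF \<open>y \<in> prob_simplex\<close>] by linarith
  qed
  show "\<exists>p\<in>X \<times> \<Theta>. fst p \<bullet> snd p = - F y" if "y \<in> prob_simplex" for y
    using primal_point_of_simplex[OF that refl] by (intro bexI[of _ "(_, _)"]) auto
  show "\<exists>y\<in>prob_simplex. fst p \<bullet> snd p \<le> - F y" if "p \<in> X \<times> \<Theta>" for p
    using objective_dominated_by_neg_F that by (auto simp: mem_Times_iff)
qed

end

theorem theorem2:
  fixes A W S U :: "real^'n^'n" and c lam y b u x \<theta>s :: "real^'n"
    and X \<Theta> :: "(real^'n) set" and F :: "real^'n \<Rightarrow> real"
  assumes A_pd: "sym_pd A" and W_pd: "sym_pd W"
    and S_sqrt: "sym_pd S" "S ** S = A"
    and U_orth: "orthogonal_matrix U"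
    and eig: "S ** W ** S = U ** diagm lam ** transpose U"
    and X_def: "X = {x'. Mnorm A x' \<le> 1}"
    and \<Theta>_def: "\<Theta> = {\<theta>. Mnorm W (\<theta> - c) \<le> 1}"
    and b_def: "b = transpose U *v (matrix_inv S *v c)"
    and F_def: "F = (\<lambda>y'. - (\<Sum>i\<in>UNIV. sqrt (y' $ i) * \<bar>b $ i\<bar>)
                          - sqrt (\<Sum>i\<in>UNIV. y' $ i / lam $ i))"
    and y_simp: "y \<in> prob_simplex"
    and u_def: "u = (\<chi> i. sqrt (y $ i) * sgn1 (b $ i))"
    and x_def: "x = matrix_inv S *v (U *v u)"
    and \<theta>s_def: "\<theta>s = c + (1 / Mnorm (matrix_inv W) x) *\<^sub>R (matrix_inv W *v x)"
  shows "x \<in> X \<and> \<theta>s \<in> \<Theta> \<and>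
         (\<forall>\<epsilon>>0. eps_sol_C F y \<epsilon> \<longleftrightarrow> eps_sol_B X \<Theta> x \<theta>s \<epsilon>)"
proof -
  \<comment> \<open>\<open>A_pd\<close> is unused: it is implied by \<open>S_sqrt\<close>.\<close>
  interpret ellipsoid_bilinear_program A W S U c lam b X \<Theta> F
    using W_pd S_sqrt U_orth eig X_def \<Theta>_def b_def F_def by unfold_locales
  have x: "x = matrix_inv S *v (U *v (\<chi> i. sqrt (y $ i) * sgn1 (b $ i)))"
    using x_def u_def by simp
  have \<theta>s: "\<theta>s = ellipsoid_maximizer W c x"
    using \<theta>s_def by (simp add: ellipsoid_maximizer_def)
  have xX: "x \<in> X" and \<theta>s\<Theta>: "\<theta>s \<in> \<Theta>" and objective: "x \<bullet> \<theta>s = - F y"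
    using primal_point_of_simplex[OF y_simp x] by (simp_all add: \<theta>s)
  have "eps_sol_C F y \<epsilon> \<longleftrightarrow> eps_sol_B X \<Theta> x \<theta>s \<epsilon>" for \<epsilon>
    unfolding eps_sol_C_def eps_sol_B_def SUP_objective_eq_uminus_INF_F
    using xX \<theta>s\<Theta> objective y_simp by auto
  then show ?thesis
    using xX \<theta>s\<Theta> by blast
qed

end
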